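(* For $\mu_\ast\in\mathbb{R}$ and $b_\ast\in\mathbb{R}$ consider the equation $1-\mu_\ast ze^{b_\ast(1-z)}=0$ in $z\in\mathbb{C}$, and define $$I(\mu_\ast):=\{b_\ast\in\mathbb{R}\mid\text{all solutions }z\text{ of }1-\mu_\ast ze^{b_\ast(1-z)}=0\text{ lie strictly outside the unit circle}\}.$$ Then: (1) if $-e^2<\mu_\ast<-1$, the set $I(\mu_\ast)$ is a non-empty open interval with $I(\mu_\ast)\subseteq(-\infty,0)$; (2) if $-e^2<\mu_{\ast,1}<\mu_{\ast,2}<-1$, then $I(\mu_{\ast,1})\subseteq I(\mu_{\ast,2})$. *)

theory Defs
  imports "HOL-Analysis.Analysis"
begin

definition I_set :: "real \<Rightarrow> real set" where
  "I_set mu = {b::real. \<forall>z::complex.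
     1 - complex_of_real mu * z * exp (complex_of_real b * (1 - z)) = 0 \<longrightarrow> cmod z > 1}"

end

theory Submission
  imports Defs "HOL-Real_Asymp.Real_Asymp"
begin

(*
  For mu < 0 and b = -beta < 0 the equation is equivalent to z e^(beta z) = -K with
  K = e^beta / (-mu) > 0. Its roots in the upper half plane are z = (s/beta)(i - cot s) with
  sin s > 0, attained for K = s/(beta sin s) e^(-s cot s), and such a root lies in the closed
  unit disc iff s <= beta sin s; the real roots are z = -w with K = w e^(-beta w). Comparing
  these curves shows that the closed disc contains a root iff K <= e^(beta - H beta), where
  H beta = 2 beta for beta <= 1 and H beta = beta (1 + cos u) for beta > 1, u being the
  solution of beta sin u = u in (0, pi). Hence b lies in I(mu) iff ln(-mu) < H(-b). Since H
  increases on (0,1], decreases on (1,oo) and H 1 = 2, the set I(mu) is an interval that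
  contains -1 and grows with mu. It is open because its complement is the projection of a
  closed set along the compact disc, and every b >= 0 admits a real root in [-1,0].
*)

lemma sin_less_self:
  fixes x :: real assumes "0 < x" shows "sin x < x"
proof (cases "x < 2")
  case True
  have x2: "0 < x/2" "x/2 < pi" using assms True pi_gt3 by auto
  have "sin x = 2 * sin (x/2) * cos (x/2)" using sin_double[of "x/2"] by simp
  also have "\<dots> < 2 * sin (x/2)"
    using x2 sin_gt_zero cos_monotone_0_pi[of 0 "x/2"] by simp
  also have "\<dots> \<le> x" using sin_x_le_x[of "x/2"] x2 by simp
  finally show ?thesis .
next
  case False
  then show ?thesis using sin_le_one[of x] by linarith
qed

lemma mult_cos_less_sin:
  fixes u :: real assumes "0 < u" "u < pi" shows "u * cos u < sin u"
proof -
  have "(\<lambda>v. sin v - v * cos v) 0 < (\<lambda>v. sin v - v * cos v) u"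
  proof (rule DERIV_pos_imp_increasing_open[OF assms(1)])
    fix x assume "0 < x" "x < u"
    with assms have "0 < x * sin x" by (simp add: sin_gt_zero)
    then show "\<exists>y. ((\<lambda>v. sin v - v * cos v) has_real_derivative y) (at x) \<and> 0 < y"
      by (intro exI[of _ "x * sin x"]) (auto intro!: derivative_eq_intros)
  qed (intro continuous_intros)
  then show ?thesis by simp
qed

lemma div_sin_strict_mono:
  fixes a b :: real assumes "0 < a" "a < b" "b < pi" shows "a / sin a < b / sin b"
proof (rule DERIV_pos_imp_increasing[OF assms(2)])
  fix x assume "a \<le> x" "x \<le> b"
  with assms have "0 < sin x" "x * cos x < sin x" by (auto intro: sin_gt_zero mult_cos_less_sin)
  then show "\<exists>y. ((\<lambda>v. v / sin v) has_real_derivative y) (at x) \<and> 0 < y"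
    by (intro exI[of _ "(sin x - x * cos x) / (sin x)^2"])
       (auto intro!: derivative_eq_intros simp: power2_eq_square field_simps)
qed

lemma mult_cot_strict_antimono:
  fixes a b :: real assumes "0 < a" "a < b" "b < pi"
  shows "b * cos b / sin b < a * cos a / sin a"
proof (rule DERIV_neg_imp_decreasing[OF assms(2)])
  fix x assume "a \<le> x" "x \<le> b"
  with assms have s: "0 < sin x" and "sin x < x" by (auto intro: sin_gt_zero sin_less_self)
  moreover have "sin x * cos x \<le> sin x" using s cos_le_one[of x] by (simp add: mult_left_le)
  ultimately have "sin x * cos x - x < 0" by linarith
  then have neg: "(sin x * cos x - x) / (sin x * sin x) < 0" using s by (simp add: divide_neg_pos)
  have "(cos x - x * sin x) * sin x - x * cos x * cos x = sin x * cos x - x"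
    using sin_cos_squared_add3[of x] by algebra
  moreover have "((\<lambda>v. v * cos v / sin v) has_real_derivative
      ((cos x - x * sin x) * sin x - x * cos x * cos x) / (sin x * sin x)) (at x)"
    using s by (auto intro!: derivative_eq_intros)
  ultimately show "\<exists>y. ((\<lambda>v. v * cos v / sin v) has_real_derivative y) (at x) \<and> y < 0"
    using neg by metis
qed

lemma sin_cos_reduce_2pi:
  fixes s :: real assumes "0 \<le> s"
  obtains s0 where "0 \<le> s0" "s0 < 2 * pi" "s0 \<le> s" "sin s0 = sin s" "cos s0 = cos s"
proof -
  define n where "n = \<lfloor>s / (2 * pi)\<rfloor>"
  have n: "0 \<le> n" using assms unfolding n_def by simp
  have "of_int n \<le> s / (2 * pi)" "s / (2 * pi) < of_int n + 1"
    unfolding n_def by linarith+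
  then have "2 * pi * of_int n \<le> s" "s < 2 * pi * of_int n + 2 * pi"
    by (simp_all add: pos_le_divide_eq pos_divide_less_eq algebra_simps)
  with n have "0 \<le> s - 2 * pi * of_int n" "s - 2 * pi * of_int n < 2 * pi"
    "s - 2 * pi * of_int n \<le> s"
    by simp_all
  moreover have "sin (s - 2 * pi * of_int n) = sin s" "cos (s - 2 * pi * of_int n) = cos s"
    by (simp_all only: sin_diff cos_diff sin_int_2pin cos_int_2pin
        mult_1_right mult_zero_right diff_zero)
  ultimately show thesis by (rule that)
qed

definition crit_angle :: "real \<Rightarrow> real" where
  "crit_angle \<beta> = (THE u. 0 < u \<and> u < pi \<and> \<beta> * sin u = u)"

lemma crit_angle_ex1:
  fixes \<beta> :: real assumes "1 < \<beta>" shows "\<exists>!u. 0 < u \<and> u < pi \<and> \<beta> * sin u = u"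
proof (rule ex_ex1I)
  define u0 where "u0 = arccos (1 / \<beta>)"
  have "0 < 1 / \<beta>" "1 / \<beta> < 1" using assms by simp_all
  then have bounds: "-1 < 1 / \<beta>" "1 / \<beta> < 1" by linarith+
  have u0: "0 < u0" "u0 < pi" "cos u0 = 1 / \<beta>"
    using arccos_lt_bounded[OF bounds] bounds unfolding u0_def by auto
  have "u0 = \<beta> * (u0 * cos u0)" using u0(3) assms by simp
  also have "\<dots> < \<beta> * sin u0" using mult_cos_less_sin[OF u0(1,2)] assms by simp
  finally have "u0 < \<beta> * sin u0" .
  then have "\<exists>u. u0 \<le> u \<and> u \<le> pi \<and> (\<lambda>v. v - \<beta> * sin v) u = 0"
    using u0 by (intro IVT') (auto intro!: continuous_intros)
  then obtain u where u: "u0 \<le> u" "u \<le> pi" "u - \<beta> * sin u = 0" by auto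
  moreover have "u \<noteq> pi" using u by auto
  ultimately show "\<exists>u. 0 < u \<and> u < pi \<and> \<beta> * sin u = u"
    using u0 by (intro exI[of _ u]) auto
next
  fix u1 u2
  assume u: "0 < u1 \<and> u1 < pi \<and> \<beta> * sin u1 = u1" "0 < u2 \<and> u2 < pi \<and> \<beta> * sin u2 = u2"
  then have "sin u1 > 0" "sin u2 > 0" by (simp_all add: sin_gt_zero)
  with u have "u1 / sin u1 = \<beta>" "u2 / sin u2 = \<beta>" by (simp_all add: field_simps)
  then show "u1 = u2"
    using u div_sin_strict_mono[of u1 u2] div_sin_strict_mono[of u2 u1]
    by (cases u1 u2 rule: linorder_cases) auto
qed

lemma crit_angle:
  assumes "1 < \<beta>"
  shows "0 < crit_angle \<beta>" "crit_angle \<beta> < pi" "\<beta> * sin (crit_angle \<beta>) = crit_angle \<beta>"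
  using theI'[OF crit_angle_ex1[OF assms]] unfolding crit_angle_def by auto

lemma div_sin_crit_angle:
  assumes "1 < \<beta>" shows "crit_angle \<beta> / sin (crit_angle \<beta>) = \<beta>"
  using crit_angle[OF assms] sin_gt_zero[of "crit_angle \<beta>"] by (simp add: field_simps)

lemma le_crit_angle_iff:
  assumes "1 < \<beta>" "0 < s" "s < pi"
  shows "s \<le> crit_angle \<beta> \<longleftrightarrow> s / sin s \<le> \<beta>"
  using crit_angle[OF assms(1)] div_sin_crit_angle[OF assms(1)] assms(2,3)
    div_sin_strict_mono[of s "crit_angle \<beta>"] div_sin_strict_mono[of "crit_angle \<beta>" s]
  by (cases s "crit_angle \<beta>" rule: linorder_cases) auto

lemma crit_angle_mono:
  assumes "1 < \<beta>" "\<beta> \<le> \<beta>'" shows "crit_angle \<beta> \<le> crit_angle \<beta>'"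
  using le_crit_angle_iff[of \<beta>' "crit_angle \<beta>"] crit_angle[OF assms(1)]
    div_sin_crit_angle[OF assms(1)] assms
  by simp

lemma mult_cos_crit_angle_less_one:
  assumes "1 < \<beta>" shows "\<beta> * cos (crit_angle \<beta>) < 1"
proof -
  note u = crit_angle[OF assms]
  have "sin (crit_angle \<beta>) * (\<beta> * cos (crit_angle \<beta>))
      = (\<beta> * sin (crit_angle \<beta>)) * cos (crit_angle \<beta>)"
    by (simp only: ac_simps)
  also have "\<dots> < sin (crit_angle \<beta>) * 1"
    using mult_cos_less_sin[OF u(1,2)] by (simp only: u(3) mult_1_right)
  finally show ?thesis using sin_gt_zero[OF u(1,2)] by (simp only: mult_less_cancel_left_pos)
qed

lemma crit_angle_cot_le:
  assumes "1 < \<beta>" "0 < s" "0 < sin s" "s \<le> \<beta> * sin s"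
  shows "\<beta> * cos (crit_angle \<beta>) \<le> s * cos s / sin s"
proof -
  define u where "u = crit_angle \<beta>"
  have u: "0 < u" "u < pi" "\<beta> * sin u = u" using crit_angle[OF assms(1)] unfolding u_def by auto
  \<comment> \<open>s may exceed pi, but its residue s0 modulo 2 pi lies below the critical angle\<close>
  obtain s0 where s0: "0 \<le> s0" "s0 < 2 * pi" "s0 \<le> s" "sin s0 = sin s" "cos s0 = cos s"
    using sin_cos_reduce_2pi assms(2) by (metis less_imp_le)
  have "s0 < pi" using s0 assms(3) sin_le_zero[of s0] by (metis linorder_not_le)
  moreover have "0 < s0" using s0 assms(3) by (metis order.order_iff_strict sin_zero)
  moreover have "s0 / sin s0 \<le> \<beta>"
    using s0 assms by (simp add: divide_right_mono pos_divide_le_eq)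
  ultimately have s0u: "s0 \<le> u" using le_crit_angle_iff[OF assms(1)] unfolding u_def by blast
  have cot_u: "\<beta> * cos u = u * cos u / sin u" using u sin_gt_zero[of u] by (simp add: field_simps)
  show ?thesis
  proof (cases "0 \<le> cos s")
    case True
    have "u * cos u / sin u \<le> s0 * cos s0 / sin s0"
      using mult_cot_strict_antimono[of s0 u] s0u u \<open>0 < s0\<close> by (cases "s0 = u") auto
    also have "\<dots> \<le> s * cos s / sin s"
      using s0 True assms(3) by (simp add: divide_right_mono mult_right_mono)
    finally show ?thesis unfolding u_def[symmetric] cot_u .
  next
    case False
    have "\<beta> * cos u \<le> \<beta> * cos s"
      using cos_monotone_0_pi_le[of s0 u] s0 s0u u assms(1) by simp
    also have "\<dots> = \<beta> * sin s * (cos s / sin s)" using assms(3) by simp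
    also have "\<dots> \<le> s * (cos s / sin s)"
      using False assms(3,4) by (intro mult_right_mono_neg) (simp_all add: divide_nonpos_pos)
    finally show ?thesis unfolding u_def by simp
  qed
qed

definition stability_boundary :: "real \<Rightarrow> real" where
  "stability_boundary \<beta> = (if \<beta> \<le> 1 then 2 * \<beta> else \<beta> * (1 + cos (crit_angle \<beta>)))"

lemma stability_boundary_half_angle:
  assumes "1 < \<beta>"
  defines "v \<equiv> crit_angle \<beta> / 2"
  shows "stability_boundary \<beta> = 2 * (v * cos v / sin v)"
proof -
  have u: "crit_angle \<beta> = 2 * v" unfolding v_def by simp
  have "0 < v" "v < pi / 2" using crit_angle[OF assms(1)] unfolding u by auto
  then have sc: "0 < sin v" "0 < cos v" by (simp_all add: sin_gt_zero cos_gt_zero)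
  have "\<beta> * (2 * sin v * cos v) = 2 * v" using crit_angle(3)[OF assms(1)] unfolding u sin_double .
  then have v: "\<beta> * sin v * cos v = v" by simp
  have "stability_boundary \<beta> = \<beta> * (2 * cos v * cos v)"
    using assms(1) unfolding stability_boundary_def u cos_double_cos by (simp add: power2_eq_square)
  also have "\<dots> = 2 * ((\<beta> * sin v * cos v) * cos v / sin v)" using sc by (simp add: field_simps)
  also have "\<dots> = 2 * (v * cos v / sin v)" by (simp only: v)
  finally show ?thesis .
qed

lemma stability_boundary_antimono:
  assumes "1 < \<beta>" "\<beta> \<le> \<beta>'" shows "stability_boundary \<beta>' \<le> stability_boundary \<beta>"
proof -
  have "crit_angle \<beta> / 2 \<le> crit_angle \<beta>' / 2" using crit_angle_mono[OF assms] by simp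
  moreover have "0 < crit_angle \<beta> / 2" "crit_angle \<beta>' / 2 < pi"
    using crit_angle[OF assms(1)] crit_angle[of \<beta>'] assms by auto
  ultimately show ?thesis
    using assms mult_cot_strict_antimono[of "crit_angle \<beta> / 2" "crit_angle \<beta>' / 2"]
    by (cases "crit_angle \<beta> = crit_angle \<beta>'") (auto simp: stability_boundary_half_angle)
qed

lemma stability_boundary_unimodal:
  assumes "0 < \<beta>1" "\<beta>1 \<le> \<beta>" "\<beta> \<le> \<beta>2"
  shows "min (stability_boundary \<beta>1) (stability_boundary \<beta>2) \<le> stability_boundary \<beta>"
proof (cases "\<beta> \<le> 1")
  case True
  then show ?thesis using assms by (simp add: stability_boundary_def min.coboundedI1)
next
  case False
  then show ?thesis using assms stability_boundary_antimono[of \<beta> \<beta>2] by (simp add: min.coboundedI2)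
qed

lemma Re_mult_exp_scaled:
  "Re (z * exp (complex_of_real \<beta> * z)) =
     exp (\<beta> * Re z) * (Re z * cos (\<beta> * Im z) - Im z * sin (\<beta> * Im z))"
  by (simp add: Re_exp Im_exp algebra_simps)

lemma Im_mult_exp_scaled:
  "Im (z * exp (complex_of_real \<beta> * z)) =
     exp (\<beta> * Re z) * (Re z * sin (\<beta> * Im z) + Im z * cos (\<beta> * Im z))"
  by (simp add: Re_exp Im_exp algebra_simps)

definition has_root_in_disc :: "real \<Rightarrow> real \<Rightarrow> bool" where
  "has_root_in_disc \<beta> K \<longleftrightarrow>
     (\<exists>z. cmod z \<le> 1 \<and> z * exp (complex_of_real \<beta> * z) = - complex_of_real K)"

(* The imaginary part of z e^(beta z) = -K forces Re z = - Im z cot s, where s = beta Im z. *)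
definition upper_root :: "real \<Rightarrow> real \<Rightarrow> complex" where
  "upper_root \<beta> s = Complex (- s * cos s / (\<beta> * sin s)) (s / \<beta>)"

definition upper_root_value :: "real \<Rightarrow> real \<Rightarrow> real" where
  "upper_root_value \<beta> s = s / (\<beta> * sin s) * exp (- (s * cos s / sin s))"

lemma upper_root_solves:
  assumes "\<beta> \<noteq> 0" "sin s \<noteq> 0"
  shows "upper_root \<beta> s * exp (complex_of_real \<beta> * upper_root \<beta> s)
    = - complex_of_real (upper_root_value \<beta> s)"
proof -
  define x where "x = - s * cos s / (\<beta> * sin s)"
  define y where "y = s / \<beta>"
  have c: "cos s * cos s + sin s * sin s = 1" by simp
  have "x * cos s - y * sin s = - (s / (\<beta> * sin s))"
    using assms unfolding x_def y_def by (simp add: field_simps) (use c in algebra)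
  moreover have "x * sin s + y * cos s = 0"
    using assms unfolding x_def y_def by (simp add: field_simps)
  moreover have "\<beta> * x = - (s * cos s / sin s)" "\<beta> * y = s"
    using assms unfolding x_def y_def by simp_all
  moreover have "upper_root \<beta> s = Complex x y" unfolding upper_root_def x_def y_def ..
  ultimately show ?thesis
    unfolding complex_eq_iff Re_mult_exp_scaled Im_mult_exp_scaled
    by (simp add: upper_root_value_def)
qed

lemma norm_upper_root:
  assumes "0 < \<beta>" "0 \<le> s" "0 < sin s"
  shows "cmod (upper_root \<beta> s) = s / (\<beta> * sin s)"
proof -
  have c: "cos s * cos s + sin s * sin s = 1" by simp
  have "(- s * cos s / (\<beta> * sin s))\<^sup>2 + (s / \<beta>)\<^sup>2 = (s / (\<beta> * sin s))\<^sup>2"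
    using assms by (simp add: field_simps power2_eq_square) (use c in algebra)
  then show ?thesis using assms by (simp add: upper_root_def complex_norm)
qed

lemma root_in_upper_halfplane:
  assumes "0 < \<beta>" "0 < K" and root: "z * exp (complex_of_real \<beta> * z) = - complex_of_real K"
    and "0 < Im z"
  defines "s \<equiv> \<beta> * Im z"
  shows "0 < sin s" "z = upper_root \<beta> s" "K = upper_root_value \<beta> s"
proof -
  define x where "x = Re z"
  define y where "y = Im z"
  define E where "E = exp (\<beta> * x)"
  have re: "E * (x * cos s - y * sin s) = - K"
    using arg_cong[OF root, of Re] unfolding Re_mult_exp_scaled by (simp add: x_def y_def E_def s_def)
  have "E * (x * sin s + y * cos s) = 0"
    using arg_cong[OF root, of Im] unfolding Im_mult_exp_scaled by (simp add: x_def y_def E_def s_def)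
  then have im: "x * sin s + y * cos s = 0" by (simp add: E_def)
  have "K * sin s = - sin s * (E * (x * cos s - y * sin s))" using re by simp
  also have "\<dots> = E * y * (cos s * cos s + sin s * sin s) - E * cos s * (x * sin s + y * cos s)"
    by algebra
  also have "\<dots> = E * y" by (simp only: im sin_cos_squared_add3 mult_1_right mult_zero_right diff_zero)
  finally have Ey: "E * y = K * sin s" by simp
  moreover have "0 < E * y" using assms(4) by (simp add: E_def y_def)
  ultimately show sin_pos: "0 < sin s" using assms(2) by (simp add: zero_less_mult_iff)
  have y: "y = s / \<beta>" using assms(1) by (simp add: s_def y_def)
  have "x = - y * cos s / sin s" using im sin_pos by (simp add: field_simps)
  then have x: "x = - s * cos s / (\<beta> * sin s)" by (simp add: y)
  then show "z = upper_root \<beta> s"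
    by (simp add: upper_root_def complex_eq_iff x_def[symmetric] y_def[symmetric] y)
  have "\<beta> * x = - (s * cos s / sin s)" using x assms(1) by simp
  then have E: "E = exp (- (s * cos s / sin s))" by (simp add: E_def)
  have "K = E * y / sin s" using Ey sin_pos by (simp add: nonzero_eq_divide_eq)
  then show "K = upper_root_value \<beta> s" by (simp add: upper_root_value_def E y)
qed

lemma root_in_disc_cases:
  assumes "0 < \<beta>" "0 < K" "cmod z \<le> 1"
    and root: "z * exp (complex_of_real \<beta> * z) = - complex_of_real K"
  shows "(\<exists>w. 0 < w \<and> w \<le> 1 \<and> K = w * exp (- \<beta> * w)) \<or>
         (\<exists>s. 0 < s \<and> 0 < sin s \<and> s \<le> \<beta> * sin s \<and> K = upper_root_value \<beta> s)"
proof -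
  have "cnj z * exp (complex_of_real \<beta> * cnj z) = - complex_of_real K"
    using arg_cong[OF root, of cnj] by (simp add: exp_cnj)
  with assms(3) root obtain z' where z': "cmod z' \<le> 1" "0 \<le> Im z'"
    and root': "z' * exp (complex_of_real \<beta> * z') = - complex_of_real K"
    by (cases "0 \<le> Im z") (auto intro: that[of z] that[of "cnj z"])
  consider "Im z' = 0" | "0 < Im z'" using z'(2) by linarith
  then show ?thesis
  proof cases
    case 1
    define w where "w = - Re z'"
    have "exp (\<beta> * Re z') * Re z' = - K"
      using arg_cong[OF root', of Re] 1 unfolding Re_mult_exp_scaled by simp
    then have K: "K = w * exp (- \<beta> * w)" by (simp add: w_def mult.commute)
    then have "0 < w" using assms(2) by (simp add: zero_less_mult_iff)
    moreover have "w \<le> 1" using abs_Re_le_cmod[of z'] z'(1) by (simp add: w_def)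
    ultimately show ?thesis using K by blast
  next
    case 2
    define s where "s = \<beta> * Im z'"
    note param = root_in_upper_halfplane[OF assms(1,2) root' 2, folded s_def]
    have "0 < s" using assms(1) 2 by (simp add: s_def)
    moreover have "s / (\<beta> * sin s) \<le> 1"
      using z'(1) param norm_upper_root[OF assms(1) _ param(1)] \<open>0 < s\<close> by simp
    then have "s \<le> \<beta> * sin s" using assms(1) param(1) by (simp add: pos_divide_le_eq)
    ultimately show ?thesis using param by blast
  qed
qed

lemma mult_exp_neg_le_exp_neg:
  fixes \<beta> w :: real assumes "\<beta> \<le> 1" "0 \<le> w" "w \<le> 1"
  shows "w * exp (- \<beta> * w) \<le> exp (- \<beta>)"
proof -
  have "w * exp (- \<beta> * w) \<le> exp (w - 1) * exp (- \<beta> * w)"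
    using exp_ge_add_one_self[of "w - 1"] by (intro mult_right_mono) auto
  also have "\<dots> = exp ((1 - \<beta>) * w - 1)" by (simp add: algebra_simps flip: exp_add)
  also have "\<dots> \<le> exp ((1 - \<beta>) * 1 - 1)"
    using mult_left_mono[of w 1 "1 - \<beta>"] assms by simp
  finally show ?thesis by simp
qed

lemma mult_exp_neg_le:
  fixes \<beta> w :: real assumes "0 < \<beta>"
  shows "w * exp (- \<beta> * w) \<le> exp (- 1) / \<beta>"
proof -
  have "\<beta> * w * exp (- \<beta> * w) \<le> exp (\<beta> * w - 1) * exp (- \<beta> * w)"
    using exp_ge_add_one_self[of "\<beta> * w - 1"] by (intro mult_right_mono) auto
  also have "\<dots> = exp (- 1)" by (simp flip: exp_add)
  finally show ?thesis using assms by (simp add: pos_le_divide_eq ac_simps)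
qed

lemma upper_root_value_le:
  assumes "1 < \<beta>" "0 < s" "0 < sin s" "s \<le> \<beta> * sin s"
  shows "upper_root_value \<beta> s \<le> exp (- \<beta> * cos (crit_angle \<beta>))"
proof -
  have "s / (\<beta> * sin s) \<le> 1" using assms by (simp add: pos_divide_le_eq)
  then have "upper_root_value \<beta> s \<le> exp (- (s * cos s / sin s))"
    unfolding upper_root_value_def using assms by (intro mult_left_le_one_le) auto
  also have "\<dots> \<le> exp (- \<beta> * cos (crit_angle \<beta>))" using crit_angle_cot_le[OF assms] by simp
  finally show ?thesis .
qed

lemma has_root_in_disc_le_small:
  assumes "0 < \<beta>" "\<beta> \<le> 1" "0 < K" "has_root_in_disc \<beta> K"
  shows "K \<le> exp (- \<beta>)"
proof -
  obtain z where "cmod z \<le> 1" "z * exp (complex_of_real \<beta> * z) = - complex_of_real K"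
    using assms(4) unfolding has_root_in_disc_def by blast
  from root_in_disc_cases[OF assms(1,3) this] show ?thesis
  proof (elim disjE exE conjE)
    fix w assume "0 < w" "w \<le> 1" "K = w * exp (- \<beta> * w)"
    then show ?thesis using mult_exp_neg_le_exp_neg[OF assms(2)] by simp
  next
    fix s assume s: "0 < s" "0 < sin s" "s \<le> \<beta> * sin s"
    have "\<beta> * sin s \<le> 1 * sin s" using assms(2) s(2) by (intro mult_right_mono) auto
    with s sin_less_self[of s] show ?thesis by linarith
  qed
qed

lemma has_root_in_disc_le_large:
  assumes "1 < \<beta>" "0 < K" "has_root_in_disc \<beta> K"
  shows "K \<le> exp (- \<beta> * cos (crit_angle \<beta>))"
proof -
  obtain z where z: "cmod z \<le> 1" "z * exp (complex_of_real \<beta> * z) = - complex_of_real K"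
    using assms(3) unfolding has_root_in_disc_def by blast
  have "0 < \<beta>" using assms(1) by simp
  from root_in_disc_cases[OF this assms(2) z] show ?thesis
  proof (elim disjE exE conjE)
    fix w assume "K = w * exp (- \<beta> * w)"
    then have "K \<le> exp (- 1) / \<beta>" using mult_exp_neg_le[OF \<open>0 < \<beta>\<close>] by simp
    also have "\<dots> \<le> exp (- 1)" using assms(1) by (simp add: divide_le_eq)
    also have "\<dots> \<le> exp (- \<beta> * cos (crit_angle \<beta>))"
      using mult_cos_crit_angle_less_one[OF assms(1)] by simp
    finally show ?thesis .
  qed (use upper_root_value_le[OF assms(1)] in simp)
qed

lemma has_root_in_disc_real:
  fixes \<beta> w :: real assumes "0 \<le> w" "w \<le> 1"
  shows "has_root_in_disc \<beta> (w * exp (- \<beta> * w))"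
  unfolding has_root_in_disc_def
proof (intro exI conjI)
  show "cmod (complex_of_real (- w)) \<le> 1" using assms by simp
  show "complex_of_real (- w) * exp (complex_of_real \<beta> * complex_of_real (- w))
      = - complex_of_real (w * exp (- \<beta> * w))"
    by (simp flip: exp_of_real)
qed

lemma has_root_in_disc_small:
  assumes "0 < \<beta>" "\<beta> \<le> 1" "0 \<le> K" "K \<le> exp (- \<beta>)"
  shows "has_root_in_disc \<beta> K"
proof -
  have "continuous_on {0..1} (\<lambda>w. w * exp (- \<beta> * w))" by (intro continuous_intros)
  then obtain w where "0 \<le> w" "w \<le> 1" "w * exp (- \<beta> * w) = K"
    using IVT'[of "\<lambda>w. w * exp (- \<beta> * w)" 0 K 1] assms by auto
  then show ?thesis using has_root_in_disc_real by metis
qed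

lemma has_root_in_disc_large:
  assumes "1 < \<beta>" "0 < K" "K \<le> exp (- \<beta> * cos (crit_angle \<beta>))"
  shows "has_root_in_disc \<beta> K"
proof (cases "K \<le> exp (- 1) / \<beta>")
  case True
  have "continuous_on {0..1 / \<beta>} (\<lambda>w. w * exp (- \<beta> * w))" by (intro continuous_intros)
  then obtain w where "0 \<le> w" "w \<le> 1 / \<beta>" "w * exp (- \<beta> * w) = K"
    using IVT'[of "\<lambda>w. w * exp (- \<beta> * w)" 0 K "1 / \<beta>"] assms True by auto
  moreover have "1 / \<beta> \<le> 1" using assms(1) by simp
  ultimately show ?thesis using has_root_in_disc_real by (metis order.trans)
next
  case False
  define u where "u = crit_angle \<beta>"
  have u: "0 < u" "u < pi" "\<beta> * sin u = u" using crit_angle[OF assms(1)] unfolding u_def by auto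
  have "(upper_root_value \<beta> \<longlongrightarrow> exp (- 1) / \<beta>) (at_right 0)"
    using assms(1) unfolding upper_root_value_def by (real_asymp simp: divide_inverse)
  then have "\<forall>\<^sub>F s in at_right 0. upper_root_value \<beta> s < K"
    using False by (intro order_tendstoD(2)) auto
  then obtain d where d: "0 < d" "\<And>s. 0 < s \<Longrightarrow> s < d \<Longrightarrow> upper_root_value \<beta> s < K"
    unfolding eventually_at_right_field by auto
  define e where "e = min (d / 2) (u / 2)"
  have e: "0 < e" "e < u" "upper_root_value \<beta> e < K" using d u(1) unfolding e_def by auto
  have sin_pos: "0 < sin x" if "e \<le> x" "x \<le> u" for x using that e u by (simp add: sin_gt_zero)
  have "u * cos u / sin u = (\<beta> * sin u) * cos u / sin u" by (simp only: u(3))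
  also have "\<dots> = \<beta> * cos u" using sin_pos[of u] e by simp
  finally have "upper_root_value \<beta> u = exp (- \<beta> * cos u)"
    using u sin_pos[of u] e by (simp add: upper_root_value_def)
  moreover have "continuous_on {e..u} (upper_root_value \<beta>)"
    unfolding upper_root_value_def using assms(1) sin_pos
    by (intro continuous_intros) (auto simp: less_imp_neq[symmetric])
  ultimately obtain s where s: "e \<le> s" "s \<le> u" "upper_root_value \<beta> s = K"
    using IVT'[of "upper_root_value \<beta>" e K u] e assms(3) unfolding u_def by auto
  have "0 < s" "s < pi" "0 < sin s" using s e u sin_pos by auto
  then have "s / sin s \<le> \<beta>" using le_crit_angle_iff[OF assms(1)] s(2) unfolding u_def by blast
  then have "cmod (upper_root \<beta> s) \<le> 1"
    using norm_upper_root[of \<beta> s] assms(1) \<open>0 < s\<close> \<open>0 < sin s\<close> by (simp add: pos_divide_le_eq)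
  then show ?thesis
    unfolding has_root_in_disc_def using upper_root_solves[of \<beta> s] assms(1) \<open>0 < sin s\<close> s(3)
    by auto
qed

lemma has_root_in_disc_iff:
  assumes "0 < \<beta>" "0 < K"
  shows "has_root_in_disc \<beta> K \<longleftrightarrow> K \<le> exp (\<beta> - stability_boundary \<beta>)"
proof (cases "\<beta> \<le> 1")
  case True
  then have threshold: "exp (\<beta> - stability_boundary \<beta>) = exp (- \<beta>)"
    by (simp add: stability_boundary_def)
  show ?thesis
    unfolding threshold
    using True assms has_root_in_disc_le_small[of \<beta> K] has_root_in_disc_small[of \<beta> K] by auto
next
  case False
  then have threshold: "exp (\<beta> - stability_boundary \<beta>) = exp (- \<beta> * cos (crit_angle \<beta>))"
    by (simp add: stability_boundary_def algebra_simps)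
  show ?thesis
    unfolding threshold
    using False assms has_root_in_disc_le_large[of \<beta> K] has_root_in_disc_large[of \<beta> K] by auto
qed

lemma I_set_equation_iff:
  fixes \<mu> b :: real and z :: complex assumes "\<mu> < 0"
  shows "1 - complex_of_real \<mu> * z * exp (complex_of_real b * (1 - z)) = 0 \<longleftrightarrow>
         z * exp (complex_of_real (- b) * z) = - complex_of_real (exp (- b) / - \<mu>)"
proof -
  have "complex_of_real b * (1 - z) = complex_of_real b + complex_of_real (- b) * z"
    by (simp add: algebra_simps)
  then have e: "exp (complex_of_real b * (1 - z))
      = complex_of_real (exp b) * exp (complex_of_real (- b) * z)"
    by (simp only: exp_add exp_of_real)
  have r: "- complex_of_real (exp (- b) / - \<mu>) = 1 / (complex_of_real \<mu> * complex_of_real (exp b))"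
    using assms by (simp add: exp_minus field_simps)
  have "complex_of_real \<mu> * complex_of_real (exp b) \<noteq> 0" using assms by simp
  then show ?thesis unfolding e r by (auto simp: field_simps)
qed

lemma mem_I_set_iff:
  assumes "\<mu> < 0" "b < 0"
  shows "b \<in> I_set \<mu> \<longleftrightarrow> ln (- \<mu>) < stability_boundary (- b)"
proof -
  have K: "0 < exp (- b) / - \<mu>" using assms(1) by (intro divide_pos_pos) auto
  have "b \<in> I_set \<mu> \<longleftrightarrow> \<not> has_root_in_disc (- b) (exp (- b) / - \<mu>)"
    unfolding I_set_def has_root_in_disc_def I_set_equation_iff[OF assms(1)] by (auto simp: not_le)
  also have "\<dots> \<longleftrightarrow> exp (- b - stability_boundary (- b)) < exp (- b) / - \<mu>"
    using has_root_in_disc_iff[OF _ K] assms(2) by (simp add: not_le)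
  also have "\<dots> \<longleftrightarrow> exp (- b - stability_boundary (- b)) < exp (- b - ln (- \<mu>))"
    using assms(1) by (simp add: exp_diff)
  also have "\<dots> \<longleftrightarrow> ln (- \<mu>) < stability_boundary (- b)" by simp
  finally show ?thesis .
qed

lemma nonneg_notin_I_set:
  assumes "\<mu> \<le> - 1" "0 \<le> b" shows "b \<notin> I_set \<mu>"
proof -
  define f where "f x = \<mu> * x * exp (b * (1 - x))" for x :: real
  have "1 * 1 \<le> - \<mu> * exp (b * 2)" using assms by (intro mult_mono) auto
  then have "f 0 \<le> 1" "1 \<le> f (- 1)" by (simp_all add: f_def)
  moreover have "continuous_on {- 1..0} f" unfolding f_def by (intro continuous_intros)
  ultimately obtain x where x: "- 1 \<le> x" "x \<le> 0" "f x = 1"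
    using IVT2'[of f 0 1 "- 1"] by auto
  have "1 - complex_of_real \<mu> * complex_of_real x * exp (complex_of_real b * (1 - complex_of_real x))
      = complex_of_real (1 - f x)"
    unfolding f_def by (simp flip: exp_of_real)
  then show ?thesis using x unfolding I_set_def by (auto dest!: spec[of _ "complex_of_real x"])
qed

lemma I_set_subset_neg:
  assumes "\<mu> \<le> - 1" shows "I_set \<mu> \<subseteq> {..<0}"
  using nonneg_notin_I_set[OF assms] by (meson linorder_not_le lessThan_iff subsetI)

lemma open_I_set: "open (I_set \<mu>)"
proof -
  define T where "T = {p :: complex \<times> real.
     1 - complex_of_real \<mu> * fst p * exp (complex_of_real (snd p) * (1 - fst p)) = 0}"
  have "closed T" unfolding T_def by (intro closed_Collect_eq continuous_intros)
  then have "closed {b. \<exists>z. z \<in> cball 0 1 \<and> (z, b) \<in> T}"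
    by (rule closed_compact_projection[OF compact_cball])
  moreover have "{b. \<exists>z. z \<in> cball 0 1 \<and> (z, b) \<in> T} = - I_set \<mu>"
    unfolding T_def I_set_def by (auto simp: not_less)
  ultimately show ?thesis by (simp add: closed_def)
qed

lemma is_interval_I_set:
  assumes "\<mu> \<le> - 1" shows "is_interval (I_set \<mu>)"
  unfolding is_interval_1
proof (intro ballI allI impI)
  fix a c x assume a: "a \<in> I_set \<mu>" and c: "c \<in> I_set \<mu>" and x: "a \<le> x \<and> x \<le> c"
  then have neg: "a < 0" "c < 0" "x < 0" using I_set_subset_neg[OF assms] by auto
  have "min (stability_boundary (- c)) (stability_boundary (- a)) \<le> stability_boundary (- x)"
    using x neg by (intro stability_boundary_unimodal) auto
  then show "x \<in> I_set \<mu>" using a c neg assms mem_I_set_iff[of \<mu>] by auto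
qed

lemma I_set_mono:
  assumes "\<mu>1 \<le> \<mu>2" "\<mu>2 < 0" "\<mu>1 \<le> - 1" shows "I_set \<mu>1 \<subseteq> I_set \<mu>2"
proof
  fix b assume b: "b \<in> I_set \<mu>1"
  then have "b < 0" using I_set_subset_neg[OF assms(3)] by auto
  moreover have "ln (- \<mu>2) \<le> ln (- \<mu>1)" using assms by simp
  moreover have "ln (- \<mu>1) < stability_boundary (- b)"
    using b \<open>b < 0\<close> assms mem_I_set_iff[of \<mu>1 b] by simp
  ultimately have "ln (- \<mu>2) < stability_boundary (- b)" by linarith
  with \<open>b < 0\<close> show "b \<in> I_set \<mu>2" using assms(2) mem_I_set_iff[of \<mu>2 b] by simp
qed

lemma neg_one_mem_I_set:
  assumes "- exp 2 < \<mu>" "\<mu> < 0" shows "- 1 \<in> I_set \<mu>"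
proof -
  have "ln (- \<mu>) < ln (exp 2)" using assms by (subst ln_less_cancel_iff) auto
  then show ?thesis using mem_I_set_iff[OF assms(2)] by (simp add: stability_boundary_def)
qed

theorem corollary5p4:
  shows "(\<forall>mu::real. - exp 2 < mu \<and> mu < -1 \<longrightarrow>
            I_set mu \<noteq> {} \<and> open (I_set mu) \<and> is_interval (I_set mu) \<and>
            I_set mu \<subseteq> {..<0})
       \<and> (\<forall>mu1 mu2::real. - exp 2 < mu1 \<and> mu1 < mu2 \<and> mu2 < -1 \<longrightarrow>
            I_set mu1 \<subseteq> I_set mu2)"
proof (intro conjI allI impI)
  fix mu :: real assume mu: "- exp 2 < mu \<and> mu < -1"
  then show "I_set mu \<noteq> {}" using neg_one_mem_I_set[of mu] by auto
  show "open (I_set mu)" by (rule open_I_set)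
  show "is_interval (I_set mu)" using mu by (intro is_interval_I_set) simp
  show "I_set mu \<subseteq> {..<0}" using mu by (intro I_set_subset_neg) simp
next
  fix mu1 mu2 :: real assume "- exp 2 < mu1 \<and> mu1 < mu2 \<and> mu2 < -1"
  then show "I_set mu1 \<subseteq> I_set mu2" by (intro I_set_mono) auto
qed

end
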